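(* Fix $d\ge1$. There is a constant $C$ depending only on $d$ such that for all $n$, the number of $d$-element subsets $J\subset\mathbb{Z}_n$ which generate $\mathbb{Z}_n$ and are exceptional is at most $Cn^{d-1}$.
   Context: Let $\omega=e^{2\pi i/n}$. For a $d$-element subset $J\subset\mathbb{Z}_n$, the cyclic harmonic frame $\Phi_J$ is the sequence $(v_k)_{k\in\mathbb{Z}_n}$ with $v_k=(\omega^{jk})_{j\in J}\in\mathbb{C}^J\cong\mathbb{C}^d$; it has $n$ distinct vectors iff $J$ generates $\mathbb{Z}_n$. Two finite sequences $(v_k)_{k\in I}$, $(w_k)_{k\in I'}$ in $\mathbb{C}^d$ are unitarily equivalent if there is a unitary $U$ and a bijection $\sigma:I\to I'$ with $v_k=Uw_{\sigma(k)}$ for all $k$. Two $d$-element subsets $J,K\subset\mathbb{Z}_n$ are multiplicatively equivalent if $K=aJ$ for some $a\in\mathbb{Z}_n^*$. A $d$-element subset $J$ is exceptional if there is a $d$-element subset $K\subset\mathbb{Z}_n$, not multiplicatively equivalent to $J$, with $\Phi_J$ and $\Phi_K$ unitarily equivalent. *)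

theory Defs
  imports Complex_Main "HOL-Computational_Algebra.Primes"
begin

text \<open>Z_n is modelled as {0..<n} with arithmetic mod n.\<close>

definition omega :: "nat \<Rightarrow> complex" where
  "omega n = exp (2 * pi * \<i> / of_nat n)"

text \<open>The k-th vector of the cyclic harmonic frame Phi_J, as a function on the index set J
  (coordinates outside J are irrelevant).\<close>
definition harm_vec :: "nat \<Rightarrow> nat set \<Rightarrow> nat \<Rightarrow> nat \<Rightarrow> complex" where
  "harm_vec n J k = (\<lambda>j. omega n ^ (j * k))"

definition generates_Zn :: "nat \<Rightarrow> nat set \<Rightarrow> bool" where
  "generates_Zn n J \<longleftrightarrow>
     (\<forall>H. H \<subseteq> {..<n} \<and> 0 \<in> H \<and> (\<forall>a\<in>H. \<forall>b\<in>H. (a + b) mod n \<in> H)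
          \<and> (\<forall>a\<in>H. (n - a) mod n \<in> H) \<and> J \<subseteq> H \<longrightarrow> H = {..<n})"

definition unitary_mat :: "nat set \<Rightarrow> nat set \<Rightarrow> (nat \<Rightarrow> nat \<Rightarrow> complex) \<Rightarrow> bool" where
  "unitary_mat J K u \<longleftrightarrow>
     (\<forall>k\<in>K. \<forall>k'\<in>K. (\<Sum>j\<in>J. cnj (u j k) * u j k') = (if k = k' then 1 else 0)) \<and>
     (\<forall>j\<in>J. \<forall>j'\<in>J. (\<Sum>k\<in>K. u j k * cnj (u j' k)) = (if j = j' then 1 else 0))"

definition unit_equiv_frames :: "nat \<Rightarrow> nat set \<Rightarrow> nat set \<Rightarrow> bool" where
  "unit_equiv_frames n J K \<longleftrightarrow>
     (\<exists>u \<sigma>. unitary_mat J K u \<and> bij_betw \<sigma> {..<n} {..<n} \<and>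
        (\<forall>k<n. \<forall>j\<in>J. harm_vec n J k j = (\<Sum>i\<in>K. u j i * harm_vec n K (\<sigma> k) i)))"

definition mult_equiv :: "nat \<Rightarrow> nat set \<Rightarrow> nat set \<Rightarrow> bool" where
  "mult_equiv n J K \<longleftrightarrow> (\<exists>a<n. coprime a n \<and> K = (\<lambda>j. (a * j) mod n) ` J)"

definition exceptional :: "nat \<Rightarrow> nat \<Rightarrow> nat set \<Rightarrow> bool" where
  "exceptional n d J \<longleftrightarrow>
     (\<exists>K. K \<subseteq> {..<n} \<and> card K = d \<and> \<not> mult_equiv n J K \<and> unit_equiv_frames n J K)"

end

theory Submission
  imports Defs "HOL-Number_Theory.Cong"
begin

text \<open>If \<open>J\<close> is a Sidon set in \<open>\<int>\<^sub>n\<close> and \<open>\<Phi>\<^sub>J = U \<Phi>\<^sub>K\<close> up to reindexing by \<open>\<sigma>\<close>,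
  then each column of \<open>U\<^sup>*\<close> is the coefficient vector of a trigonometric polynomial with
  frequencies in \<open>J\<close> that is unimodular on \<open>\<int>\<^sub>n\<close>. Computing the Fourier coefficients of
  \<open>|g|\<^sup>2 = 1\<close> and using that all differences \<open>j - j'\<close> are distinct shows that such a
  polynomial is a monomial, so \<open>U\<close> is a monomial matrix. Comparing \<open>k = 0\<close> and \<open>k = 1\<close> then
  gives \<open>J = aK\<close> with \<open>a = \<sigma>(1) - \<sigma>(0)\<close>, and \<open>a\<close> is a unit because \<open>J\<close> generates
  \<open>\<int>\<^sub>n\<close>. Hence every exceptional generating set fails to be Sidon, and a non-Sidon
  \<open>d\<close>-set contains an element \<open>w\<close> with \<open>w = x + y - z\<close> or \<open>2w = 2a\<close> for other elements
  \<open>x, y, z, a\<close>: given the remaining \<open>d - 1\<close> elements there are \<open>O(d\<^sup>3)\<close> choices for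
  \<open>w\<close>, so there are \<open>O(d\<^sup>3 n\<^sup>d\<^sup>-\<^sup>1)\<close> such sets.\<close>

lemma omega_power: "omega n ^ k = cis (2 * pi * real k / real n)"
proof -
  have "omega n = cis (2 * pi / real n)"
    unfolding omega_def by (simp add: cis_conv_exp mult_ac)
  then show ?thesis by (simp add: DeMoivre mult_ac)
qed

lemma norm_omega_power [simp]: "norm (omega n ^ k) = 1"
  by (simp add: omega_power)

lemma omega_power_neq_0 [simp]: "omega n ^ k \<noteq> 0"
  by (simp add: omega_power)

lemma cnj_omega_power: "cnj (omega n ^ k) = inverse (omega n ^ k)"
  by (simp add: omega_power cis_cnj)

lemma omega_power_n: "n > 0 \<Longrightarrow> omega n ^ n = 1"
  by (simp add: omega_power)

lemma omega_power_mod: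
  assumes "n > 0"
  shows "omega n ^ k = omega n ^ (k mod n)"
proof -
  have "omega n ^ k = (omega n ^ n) ^ (k div n) * omega n ^ (k mod n)"
    by (simp flip: power_mult power_add)
  then show ?thesis
    using omega_power_n[OF assms] by simp
qed

lemma omega_power_eq_iff:
  assumes "n > 0"
  shows "omega n ^ a = omega n ^ b \<longleftrightarrow> a mod n = b mod n"
proof -
  have "inj_on (\<lambda>k. omega n ^ k) {..<n}"
    using bij_betw_roots_unity[OF assms] by (simp add: bij_betw_def omega_power)
  then show ?thesis
    using omega_power_mod[OF assms, of a] omega_power_mod[OF assms, of b] assms
    by (auto dest: inj_onD)
qed

lemma sum_omega_orthogonal:
  assumes "n > 0"
  shows "(\<Sum>k<n. omega n ^ (x * k) * cnj (omega n ^ (y * k))) =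
           (if x mod n = y mod n then of_nat n else 0)"
proof -
  define r where "r = omega n ^ x / omega n ^ y"
  have summand: "omega n ^ (x * k) * cnj (omega n ^ (y * k)) = r ^ k" for k
    unfolding r_def cnj_omega_power
    by (simp add: power_mult power_divide divide_inverse power_mult_distrib power_inverse)
  have "r ^ n = (omega n ^ n) ^ x / (omega n ^ n) ^ y"
    by (simp add: r_def power_divide flip: power_mult) (simp add: mult.commute)
  then have r_n: "r ^ n = 1"
    using omega_power_n[OF assms] by simp
  have "r = 1 \<longleftrightarrow> x mod n = y mod n"
    using omega_power_eq_iff[OF assms] omega_power_neq_0[of n 1] by (simp add: r_def)
  then show ?thesis
    unfolding summand by (cases "r = 1") (simp_all add: geometric_sum r_n)
qed

definition sidon :: "nat \<Rightarrow> nat set \<Rightarrow> bool" where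
  "sidon n J \<longleftrightarrow> (\<forall>x\<in>J. \<forall>y\<in>J. \<forall>z\<in>J. \<forall>w\<in>J.
     (x + y) mod n = (z + w) mod n \<longrightarrow> (x = z \<and> y = w) \<or> (x = w \<and> y = z))"

lemma sum_norm_sq_trig_poly_twisted:
  fixes c :: "nat \<Rightarrow> complex"
  assumes n: "n > 0" and "finite J"
  defines "g k \<equiv> \<Sum>j\<in>J. c j * omega n ^ (j * k)"
  shows "(\<Sum>k<n. g k * cnj (g k) * (omega n ^ (j1 * k) * cnj (omega n ^ (j0 * k)))) =
           of_nat n * (\<Sum>j\<in>J. \<Sum>j'\<in>J.
             if (j + j1) mod n = (j' + j0) mod n then c j * cnj (c j') else 0)"
proof -
  let ?e = "\<lambda>j j' k. omega n ^ ((j + j1) * k) * cnj (omega n ^ ((j' + j0) * k))"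
  have expand: "g k * cnj (g k) * (omega n ^ (j1 * k) * cnj (omega n ^ (j0 * k))) =
      (\<Sum>j\<in>J. \<Sum>j'\<in>J. c j * cnj (c j') * ?e j j' k)" for k
  proof -
    let ?t = "omega n ^ (j1 * k) * cnj (omega n ^ (j0 * k))"
    have "g k * cnj (g k) * ?t =
        (\<Sum>j\<in>J. \<Sum>j'\<in>J. c j * omega n ^ (j * k) * cnj (c j' * omega n ^ (j' * k))) * ?t"
      unfolding g_def cnj_sum sum_product ..
    also have "\<dots> =
        (\<Sum>j\<in>J. \<Sum>j'\<in>J. c j * omega n ^ (j * k) * cnj (c j' * omega n ^ (j' * k)) * ?t)"
      by (simp only: sum_distrib_right)
    also have "\<dots> = (\<Sum>j\<in>J. \<Sum>j'\<in>J. c j * cnj (c j') * ?e j j' k)"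
      unfolding add_mult_distrib power_add complex_cnj_mult by (simp add: ac_simps)
    finally show ?thesis .
  qed
  have "(\<Sum>k<n. \<Sum>j\<in>J. \<Sum>j'\<in>J. c j * cnj (c j') * ?e j j' k) =
      (\<Sum>j\<in>J. \<Sum>j'\<in>J. c j * cnj (c j') * (\<Sum>k<n. ?e j j' k))"
    by (simp add: sum_distrib_left sum.swap[of _ "{..<n}"])
  also have "\<dots> = of_nat n * (\<Sum>j\<in>J. \<Sum>j'\<in>J.
             if (j + j1) mod n = (j' + j0) mod n then c j * cnj (c j') else 0)"
    unfolding sum_omega_orthogonal[OF n] sum_distrib_left by (intro sum.cong refl) simp
  finally show ?thesis
    by (simp only: expand)
qed

text \<open>Twisting \<open>|g|\<^sup>2 = 1\<close> by the character of frequency \<open>j\<^sub>1 - j\<^sub>0\<close> kills the sum, while on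
  the coefficient side the Sidon property leaves only the single product \<open>c j\<^sub>0 * cnj (c j\<^sub>1)\<close>.\<close>

lemma sidon_unimodular_coeff_product_eq_0:
  fixes c :: "nat \<Rightarrow> complex"
  assumes n: "n > 0" and J: "J \<subseteq> {..<n}" "sidon n J"
    and unimodular: "\<forall>k<n. norm (\<Sum>j\<in>J. c j * omega n ^ (j * k)) = 1"
    and j01: "j0 \<in> J" "j1 \<in> J" "j0 \<noteq> j1"
  shows "c j0 * cnj (c j1) = 0"
proof -
  define g where "g k = (\<Sum>j\<in>J. c j * omega n ^ (j * k))" for k
  have fin: "finite J"
    using J(1) finite_subset by blast
  have "g k * cnj (g k) = 1" if "k < n" for k
    using unimodular that complex_norm_square[of "g k"] by (simp add: g_def)
  then have "(\<Sum>k<n. g k * cnj (g k) * (omega n ^ (j1 * k) * cnj (omega n ^ (j0 * k)))) =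
      (\<Sum>k<n. omega n ^ (j1 * k) * cnj (omega n ^ (j0 * k)))"
    by simp
  also have "\<dots> = 0"
    using sum_omega_orthogonal[OF n, of j1 j0] j01 J(1) by (auto simp: subset_iff)
  finally have "0 = of_nat n * (\<Sum>j\<in>J. \<Sum>j'\<in>J.
      if (j + j1) mod n = (j' + j0) mod n then c j * cnj (c j') else 0)"
    unfolding g_def sum_norm_sq_trig_poly_twisted[OF n fin] ..
  also have "(\<Sum>j\<in>J. \<Sum>j'\<in>J.
      if (j + j1) mod n = (j' + j0) mod n then c j * cnj (c j') else 0) =
      (\<Sum>j\<in>J. if j = j0 then \<Sum>j'\<in>J. if j' = j1 then c j0 * cnj (c j1) else 0 else 0)"
  proof (rule sum.cong[OF refl])
    fix j assume j: "j \<in> J"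
    have "(j + j1) mod n = (j' + j0) mod n \<longleftrightarrow> j = j0 \<and> j' = j1" if "j' \<in> J" for j'
      using J(2) j01 j that unfolding sidon_def by (metis add.commute)
    then show "(\<Sum>j'\<in>J. if (j + j1) mod n = (j' + j0) mod n then c j * cnj (c j') else 0) =
        (if j = j0 then \<Sum>j'\<in>J. if j' = j1 then c j0 * cnj (c j1) else 0 else 0)"
      by (auto intro: sum.neutral sum.cong)
  qed
  also have "\<dots> = c j0 * cnj (c j1)"
    using fin j01 by simp
  finally show ?thesis
    using n by simp
qed

lemma sidon_unimodular_imp_monomial:
  fixes c :: "nat \<Rightarrow> complex"
  assumes n: "n > 0" and J: "J \<subseteq> {..<n}" "sidon n J"
    and unimodular: "\<forall>k<n. norm (\<Sum>j\<in>J. c j * omega n ^ (j * k)) = 1"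
  shows "\<exists>j\<in>J. c j \<noteq> 0 \<and> (\<forall>j'\<in>J. j' \<noteq> j \<longrightarrow> c j' = 0)"
proof -
  have "(\<Sum>j\<in>J. c j) \<noteq> 0"
    using unimodular n by force
  then obtain j where j: "j \<in> J" "c j \<noteq> 0"
    by (meson sum.neutral)
  have "c j' = 0" if "j' \<in> J" "j' \<noteq> j" for j'
    using sidon_unimodular_coeff_product_eq_0[OF n J unimodular j(1) that(1)] that j by simp
  then show ?thesis
    using j by blast
qed

lemma unitary_mat_adjoint_apply:
  assumes u: "unitary_mat J K u" and "finite K" "i \<in> K"
    and x: "\<forall>j\<in>J. x j = (\<Sum>i'\<in>K. u j i' * y i')"
  shows "y i = (\<Sum>j\<in>J. cnj (u j i) * x j)"
proof -
  have "(\<Sum>j\<in>J. cnj (u j i) * x j) = (\<Sum>j\<in>J. \<Sum>i'\<in>K. cnj (u j i) * u j i' * y i')"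
    using x by (simp add: sum_distrib_left mult.assoc)
  also have "\<dots> = (\<Sum>i'\<in>K. (\<Sum>j\<in>J. cnj (u j i) * u j i') * y i')"
    by (simp add: sum.swap[of _ J] sum_distrib_right)
  also have "\<dots> = (\<Sum>i'\<in>K. (if i = i' then y i' else 0))"
    using u \<open>i \<in> K\<close> unfolding unitary_mat_def by (intro sum.cong refl) auto
  also have "\<dots> = y i"
    using assms(2,3) by simp
  finally show ?thesis ..
qed

lemma unitary_mat_row_nonzero:
  assumes "unitary_mat J K u" "j \<in> J"
  shows "\<exists>i\<in>K. u j i \<noteq> 0"
proof (rule ccontr)
  assume "\<not> ?thesis"
  then have "(\<Sum>i\<in>K. u j i * cnj (u j i)) = 0"
    by simp
  then show False
    using assms unfolding unitary_mat_def by simp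
qed

lemma mod_eq_shift_imp_eq_mult_mod:
  fixes i j s0 s1 n :: nat
  assumes "(i * s1) mod n = (i * s0 + j) mod n" "s0 < n" "j < n"
  shows "j = ((s1 + n - s0) * i) mod n"
proof -
  obtain t where "n = s0 + t"
    using assms(2) less_imp_add_positive by blast
  then have "(s1 + n - s0) * i + i * s0 = i * s1 + n * i"
    by (simp add: algebra_simps)
  then have "[(s1 + n - s0) * i + i * s0 = j + i * s0] (mod n)"
    using assms(1) unfolding cong_def by (simp add: add.commute mod_add_left_eq)
  then have "[(s1 + n - s0) * i = j] (mod n)"
    by (simp only: cong_add_rcancel_nat)
  then show ?thesis
    using assms(3) unfolding cong_def by simp
qed

lemma sidon_frame_equiv_imp_scaled:
  assumes n: "n \<ge> 2" and J: "J \<subseteq> {..<n}" "sidon n J" and K: "K \<subseteq> {..<n}"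
    and equiv: "unit_equiv_frames n J K"
  shows "\<exists>a. J = (\<lambda>i. (a * i) mod n) ` K"
proof -
  have n0: "n > 0" using n by simp
  have finite: "finite J" "finite K"
    using J(1) K finite_subset by auto
  obtain u \<sigma> where u: "unitary_mat J K u" and \<sigma>: "bij_betw \<sigma> {..<n} {..<n}"
    and frame: "\<forall>k<n. \<forall>j\<in>J. omega n ^ (j * k) = (\<Sum>i\<in>K. u j i * omega n ^ (i * \<sigma> k))"
    using equiv unfolding unit_equiv_frames_def harm_vec_def by blast
  have adjoint: "omega n ^ (i * \<sigma> k) = (\<Sum>j\<in>J. cnj (u j i) * omega n ^ (j * k))"
    if "i \<in> K" "k < n" for i k
    using unitary_mat_adjoint_apply[OF u finite(2) that(1),
        of "\<lambda>j. omega n ^ (j * k)" "\<lambda>i. omega n ^ (i * \<sigma> k)"] frame that(2)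
    by blast
  define a where "a = \<sigma> 1 + n - \<sigma> 0"
  have column: "(\<exists>j\<in>J. u j i \<noteq> 0) \<and> (\<forall>j\<in>J. u j i \<noteq> 0 \<longrightarrow> j = (a * i) mod n)"
    if i: "i \<in> K" for i
  proof -
    have "\<forall>k<n. norm (\<Sum>j\<in>J. cnj (u j i) * omega n ^ (j * k)) = 1"
    proof (intro allI impI)
      fix k assume "k < n"
      show "norm (\<Sum>j\<in>J. cnj (u j i) * omega n ^ (j * k)) = 1"
        unfolding adjoint[OF i \<open>k < n\<close>, symmetric] by (rule norm_omega_power)
    qed
    from sidon_unimodular_imp_monomial[OF n0 J this]
    obtain j where j: "j \<in> J" "u j i \<noteq> 0" and others: "\<forall>j'\<in>J. j' \<noteq> j \<longrightarrow> u j' i = 0"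
      by auto
    have single: "omega n ^ (i * \<sigma> k) = cnj (u j i) * omega n ^ (j * k)" if "k < n" for k
      unfolding adjoint[OF i that] using finite(1) j(1) others
      by (subst sum.mono_neutral_right[of J "{j}"]) auto
    have "omega n ^ (i * \<sigma> 1) = omega n ^ (i * \<sigma> 0 + j)"
      using single[of 0] single[of 1] n by (simp add: power_add)
    then have "(i * \<sigma> 1) mod n = (i * \<sigma> 0 + j) mod n"
      using omega_power_eq_iff[OF n0] by blast
    moreover have "\<sigma> 0 < n" "j < n"
      using \<sigma> n0 j(1) J(1) by (auto simp: bij_betw_def)
    ultimately have "j = (a * i) mod n"
      unfolding a_def by (rule mod_eq_shift_imp_eq_mult_mod)
    then show ?thesis
      using j others by blast
  qed
  have "J = (\<lambda>i. (a * i) mod n) ` K"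
  proof
    show "(\<lambda>i. (a * i) mod n) ` K \<subseteq> J"
      using column by fastforce
    show "J \<subseteq> (\<lambda>i. (a * i) mod n) ` K"
    proof
      fix j assume "j \<in> J"
      then obtain i where "i \<in> K" "u j i \<noteq> 0"
        using unitary_mat_row_nonzero[OF u] by blast
      then show "j \<in> (\<lambda>i. (a * i) mod n) ` K"
        using column \<open>j \<in> J\<close> by blast
    qed
  qed
  then show ?thesis ..
qed

lemma generates_Zn_common_divisor:
  assumes gen: "generates_Zn n J" and J: "J \<subseteq> {..<n}" and n: "1 < n"
    and g: "g dvd n" "\<forall>j\<in>J. g dvd j"
  shows "g = 1"
proof -
  define H where "H = {x. x < n \<and> g dvd x}"
  have "H = {..<n}"
    using gen unfolding generates_Zn_def
  proof (elim allE impE)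
    show "H \<subseteq> {..<n} \<and> 0 \<in> H \<and> (\<forall>x\<in>H. \<forall>y\<in>H. (x + y) mod n \<in> H) \<and>
        (\<forall>x\<in>H. (n - x) mod n \<in> H) \<and> J \<subseteq> H"
      using J n g by (auto simp: H_def dvd_mod)
  qed
  then have "1 \<in> H"
    using n by simp
  then show ?thesis
    by (simp add: H_def)
qed

lemma generates_Zn_scaled_imp_coprime:
  assumes "generates_Zn n ((\<lambda>i. (a * i) mod n) ` K)" "1 < n"
  shows "coprime a n"
proof -
  have "gcd a n = 1"
    using assms by (intro generates_Zn_common_divisor[of n _ "gcd a n"]) (auto simp: dvd_mod)
  then show ?thesis
    by (rule gcd_eq_1_imp_coprime)
qed

lemma mult_equiv_if_scaled:
  assumes n: "1 < n" and a: "coprime a n" and K: "K \<subseteq> {..<n}"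
    and J: "J = (\<lambda>i. (a * i) mod n) ` K"
  shows "mult_equiv n J K"
proof -
  obtain b where b: "b < n" "[a * b = Suc 0] (mod n)"
    using a coprime_iff_invertible'_nat[of n a] n by auto
  have "coprime b n"
    using b(2) coprime_iff_invertible_nat[of b n] by (auto simp: mult.commute)
  moreover have "(b * ((a * i) mod n)) mod n = i" if "i \<in> K" for i
  proof -
    have "(b * ((a * i) mod n)) mod n = ((a * b) mod n * i) mod n"
      by (simp add: mod_mult_right_eq mod_mult_left_eq mult_ac)
    also have "\<dots> = i"
      using b(2) n that K unfolding cong_def by auto
    finally show ?thesis .
  qed
  then have "K = (\<lambda>j. (b * j) mod n) ` J"
    unfolding J image_image by simp
  ultimately show ?thesis
    unfolding mult_equiv_def using b(1) by blast
qed

lemma sidon_generating_not_exceptional: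
  assumes "n \<ge> 2" "J \<subseteq> {..<n}" "generates_Zn n J" "sidon n J"
  shows "\<not> exceptional n d J"
proof
  assume "exceptional n d J"
  then obtain K where K: "K \<subseteq> {..<n}" "\<not> mult_equiv n J K" "unit_equiv_frames n J K"
    unfolding exceptional_def by blast
  obtain a where a: "J = (\<lambda>i. (a * i) mod n) ` K"
    using sidon_frame_equiv_imp_scaled[OF assms(1,2,4) K(1,3)] by blast
  have "coprime a n"
    using generates_Zn_scaled_imp_coprime assms(1,3) a by auto
  then show False
    using mult_equiv_if_scaled a K assms(1) by auto
qed

text \<open>The elements \<open>w\<close> whose addition to \<open>S\<close> can create a non-trivial relation
  \<open>x + y = z + w\<close> or \<open>2w = 2a\<close>.\<close>

definition sidon_obstruction :: "nat \<Rightarrow> nat set \<Rightarrow> nat set" where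
  "sidon_obstruction n S =
     (\<lambda>(a, b, c). (a + b + n - c) mod n) ` (S \<times> S \<times> S) \<union>
     (\<Union>a\<in>S. {w. w < n \<and> (2 * w) mod n = (2 * a) mod n})"

lemma card_double_mod_eq_le_2: "card {w::nat. w < n \<and> (2 * w) mod n = c} \<le> 2"
proof (cases "{w. w < n \<and> (2 * w) mod n = c} = {}")
  case False
  define T where "T = {w. w < n \<and> (2 * w) mod n = c}"
  define m where "m = Min T"
  have "finite T" "T \<noteq> {}"
    using False by (simp_all add: T_def)
  then have m: "m \<in> T" "\<forall>w\<in>T. m \<le> w"
    by (simp_all add: m_def)
  have "T \<subseteq> {m, m + n div 2}"
  proof
    fix w assume w: "w \<in> T"
    show "w \<in> {m, m + n div 2}"
    proof (cases "w = m")
      case False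
      with w m have "m < w" by force
      moreover have "(2 * m) mod n = (2 * w) mod n" "w < n"
        using w m(1) by (auto simp: T_def)
      ultimately obtain t where t: "2 * w - 2 * m = n * t"
        by (metis mod_eq_dvd_iff_nat dvdE less_imp_le mult_le_mono2)
      moreover have "n * t < n * 2" "0 < n * t"
        using t \<open>m < w\<close> \<open>w < n\<close> by linarith+
      ultimately have "t = 1"
        by auto
      with t have "2 * w - 2 * m = n"
        by simp
      with \<open>m < w\<close> have "w = m + n div 2"
        by presburger
      then show ?thesis by simp
    qed simp
  qed
  then have "card T \<le> card {m, m + n div 2}"
    by (intro card_mono) auto
  also have "\<dots> \<le> 2"
    by (simp add: card_insert_if)
  finally show ?thesis
    by (simp add: T_def)
next
  case True
  then show ?thesis
    by (simp only: card.empty)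
qed

lemma finite_sidon_obstruction: "finite S \<Longrightarrow> finite (sidon_obstruction n S)"
  by (simp add: sidon_obstruction_def)

lemma card_sidon_obstruction_le:
  assumes "finite S"
  shows "card (sidon_obstruction n S) \<le> card S ^ 3 + 2 * card S"
proof -
  have "card ((\<lambda>(a, b, c). (a + b + n - c) mod n) ` (S \<times> S \<times> S)) \<le> card (S \<times> S \<times> S)"
    using assms by (intro card_image_le) simp
  also have "\<dots> = card S ^ 3"
    by (simp add: card_cartesian_product power3_eq_cube)
  finally have sums: "card ((\<lambda>(a, b, c). (a + b + n - c) mod n) ` (S \<times> S \<times> S)) \<le> card S ^ 3" .
  have "card (\<Union>a\<in>S. {w. w < n \<and> (2 * w) mod n = (2 * a) mod n}) \<le>
      (\<Sum>a\<in>S. card {w. w < n \<and> (2 * w) mod n = (2 * a) mod n})"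
    using assms by (rule card_UN_le)
  also have "\<dots> \<le> (\<Sum>a\<in>S. 2)"
    by (intro sum_mono card_double_mod_eq_le_2)
  finally have doubles: "card (\<Union>a\<in>S. {w. w < n \<and> (2 * w) mod n = (2 * a) mod n}) \<le> 2 * card S"
    by simp
  show ?thesis
    unfolding sidon_obstruction_def using sums doubles card_Un_le by (meson add_mono order_trans)
qed

lemma sidon_obstruction_memberI:
  assumes J: "J \<subseteq> {..<n}" "x \<in> J" "y \<in> J" "z \<in> J" "w \<in> J"
    and rel: "(x + y) mod n = (z + w) mod n"
    and nontrivial: "z \<noteq> w" "\<not> (x = z \<and> y = w)" "\<not> (x = w \<and> y = z)"
  shows "w \<in> sidon_obstruction n (J - {w})"
proof -
  have lt: "x < n" "y < n" "z < n" "w < n"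
    using J by auto
  have cancel: "b = c" if "(a + b) mod n = (a + c) mod n" "b < n" "c < n" for a b c :: nat
    using that cong_add_lcancel_nat cong_less_modulus_unique_nat unfolding cong_def by blast
  have "w \<noteq> x" "w \<noteq> y"
    using rel nontrivial lt cancel[of w y z] cancel[of w x z] by (auto simp: add.commute)
  moreover have "w = (x + y + n - z) mod n"
  proof -
    have "x + y + n - z = (x + y) + (n - z)"
      using lt by simp
    then have "(x + y + n - z) mod n = ((x + y) mod n + (n - z)) mod n"
      by (simp only: mod_add_left_eq)
    also have "\<dots> = (z + w + (n - z)) mod n"
      unfolding rel by (simp only: mod_add_left_eq)
    also have "z + w + (n - z) = w + n"
      using lt by simp
    finally show ?thesis
      using lt by simp
  qed
  ultimately show ?thesis
    using J nontrivial(1) unfolding sidon_obstruction_def by force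
qed

lemma not_sidon_imp_obstructed:
  assumes J: "J \<subseteq> {..<n}" and "\<not> sidon n J"
  shows "\<exists>w\<in>J. w \<in> sidon_obstruction n (J - {w})"
proof -
  obtain x y z w where xyzw: "x \<in> J" "y \<in> J" "z \<in> J" "w \<in> J"
    and rel: "(x + y) mod n = (z + w) mod n"
    and nontrivial: "\<not> (x = z \<and> y = w)" "\<not> (x = w \<and> y = z)"
    using assms(2) unfolding sidon_def by blast
  consider "z \<noteq> w" | "x \<noteq> y" | "x = y" "z = w"
    by blast
  then show ?thesis
  proof cases
    case 1
    then show ?thesis
      using sidon_obstruction_memberI[OF J xyzw rel 1 nontrivial] xyzw by blast
  next
    case 2
    then have "y \<in> sidon_obstruction n (J - {y})"
      using sidon_obstruction_memberI[OF J xyzw(3,4,1,2) rel[symmetric] 2] nontrivial by blast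
    then show ?thesis
      using xyzw by blast
  next
    case 3
    then have "x \<noteq> z" "(2 * x) mod n = (2 * z) mod n"
      using rel nontrivial by (auto simp: mult_2)
    then have "x \<in> sidon_obstruction n (J - {x})"
      using xyzw J unfolding sidon_obstruction_def by auto
    then show ?thesis
      using xyzw by blast
  qed
qed

lemma card_subsets_with_element_in_le:
  assumes A: "finite A"
    and F: "\<And>S. S \<subseteq> A \<Longrightarrow> card S = d - 1 \<Longrightarrow> finite (F S) \<and> card (F S) \<le> m"
  shows "card {J. J \<subseteq> A \<and> card J = d \<and> (\<exists>w\<in>J. w \<in> F (J - {w}))}
           \<le> m * (card A choose (d - 1))"
proof -
  define SS where "SS = {S. S \<subseteq> A \<and> card S = d - 1}"
  define Sig where "Sig = (SIGMA S:SS. F S \<inter> A)"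
  have "finite SS"
    using A by (simp add: SS_def)
  then have fin: "finite Sig"
    using F by (auto simp: Sig_def SS_def)
  have "{J. J \<subseteq> A \<and> card J = d \<and> (\<exists>w\<in>J. w \<in> F (J - {w}))} \<subseteq> (\<lambda>(S, w). insert w S) ` Sig"
  proof
    fix J assume "J \<in> {J. J \<subseteq> A \<and> card J = d \<and> (\<exists>w\<in>J. w \<in> F (J - {w}))}"
    then obtain w where J: "J \<subseteq> A" "w \<in> J" "w \<in> F (J - {w})" "card J = d"
      by blast
    then have "(J - {w}, w) \<in> Sig"
      using finite_subset[OF J(1) A] by (auto simp: Sig_def SS_def)
    then show "J \<in> (\<lambda>(S, w). insert w S) ` Sig"
      using J(2) by (auto intro!: image_eqI[where x = "(J - {w}, w)"])
  qed
  then have "card {J. J \<subseteq> A \<and> card J = d \<and> (\<exists>w\<in>J. w \<in> F (J - {w}))} \<le> card Sig"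
    using fin by (meson card_image_le card_mono finite_imageI order_trans)
  also have "card Sig = (\<Sum>S\<in>SS. card (F S \<inter> A))"
    unfolding Sig_def using \<open>finite SS\<close> A by (intro card_SigmaI) auto
  also have "\<dots> \<le> (\<Sum>S\<in>SS. m)"
  proof (rule sum_mono)
    fix S assume "S \<in> SS"
    then have "finite (F S)" "card (F S) \<le> m"
      using F by (auto simp: SS_def)
    then show "card (F S \<inter> A) \<le> m"
      by (meson Int_lower1 card_mono order_trans)
  qed
  also have "\<dots> = m * (card A choose (d - 1))"
    using n_subsets[OF A] by (simp add: SS_def)
  finally show ?thesis .
qed

lemma binomial_le_power: "n choose k \<le> n ^ k"
proof -
  have "n choose k \<le> (n choose k) * fact k"
    using mult_le_mono2[OF fact_ge_1[of k], of "n choose k"] by simp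
  then show ?thesis
    using binomial_fact_pow[of n k] by linarith
qed

lemma card_exceptional_generating_le:
  assumes n: "2 \<le> n"
  shows "card {J. J \<subseteq> {..<n} \<and> card J = d \<and> generates_Zn n J \<and> exceptional n d J}
           \<le> ((d - 1) ^ 3 + 2 * (d - 1)) * n ^ (d - 1)"
proof -
  let ?m = "(d - 1) ^ 3 + 2 * (d - 1)"
  have "{J. J \<subseteq> {..<n} \<and> card J = d \<and> generates_Zn n J \<and> exceptional n d J} \<subseteq>
      {J. J \<subseteq> {..<n} \<and> card J = d \<and> (\<exists>w\<in>J. w \<in> sidon_obstruction n (J - {w}))}"
    using sidon_generating_not_exceptional[OF n] not_sidon_imp_obstructed by blast
  then have "card {J. J \<subseteq> {..<n} \<and> card J = d \<and> generates_Zn n J \<and> exceptional n d J} \<le>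
      card {J. J \<subseteq> {..<n} \<and> card J = d \<and> (\<exists>w\<in>J. w \<in> sidon_obstruction n (J - {w}))}"
    by (intro card_mono) auto
  also have "\<dots> \<le> ?m * (n choose (d - 1))"
  proof -
    have "finite (sidon_obstruction n S) \<and> card (sidon_obstruction n S) \<le> ?m"
      if "S \<subseteq> {..<n}" "card S = d - 1" for S
      using finite_subset[OF that(1)] finite_sidon_obstruction[of S n]
        card_sidon_obstruction_le[of S n] that(2)
      by simp
    from card_subsets_with_element_in_le[of "{..<n}", OF _ this] show ?thesis
      by simp
  qed
  also have "\<dots> \<le> ?m * n ^ (d - 1)"
    by (intro mult_le_mono2 binomial_le_power)
  finally show ?thesis .
qed

theorem proposition4p5:
  fixes d :: nat
  assumes "d \<ge> 1"
  shows "\<exists>C::real. \<forall>n::nat.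
           real (card {J. J \<subseteq> {..<n} \<and> card J = d \<and> generates_Zn n J \<and> exceptional n d J})
             \<le> C * real n ^ (d - 1)"
proof (intro exI allI)
  fix n :: nat
  let ?T = "{J. J \<subseteq> {..<n} \<and> card J = d \<and> generates_Zn n J \<and> exceptional n d J}"
  let ?m = "(d - 1) ^ 3 + 2 * (d - 1)"
  have "card ?T \<le> (?m + 1) * n ^ (d - 1)"
  proof (cases "2 \<le> n")
    case True
    then show ?thesis
      using card_exceptional_generating_le[of n d] by (meson add_le_mono1 le_add1 le_trans mult_le_mono1)
  next
    case False
    have "card ?T \<le> card {J. J \<subseteq> {..<n} \<and> card J = d}"
      by (intro card_mono) (auto simp: finite_subset)
    also have "\<dots> = n choose d"
      using n_subsets[of "{..<n}" d] by simp
    also have "\<dots> \<le> n ^ d"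
      by (rule binomial_le_power)
    also have "\<dots> \<le> n ^ (d - 1)"
      using False assms by (cases d) auto
    finally show ?thesis
      by (simp add: le_trans)
  qed
  then have "real (card ?T) \<le> real ((?m + 1) * n ^ (d - 1))"
    by (simp only: of_nat_le_iff)
  then show "real (card ?T) \<le> real (?m + 1) * real n ^ (d - 1)"
    by (simp only: of_nat_mult of_nat_power)
qed

end
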